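(* Let $X$ be a transitive subshift whose language $\mathcal L$ is aperiodic and has eventually constant growth with rate $K$. Then there is $N$ such that for every $x\in X$, every $n\ge N$ and every $\mathfrak s\in\{\ell,r\}$ there exists an $\mathfrak s$-special $w\in\mathcal L_n$ with $\mathcal D(w,x)\ge 1/K$.
   Context: A subshift is a nonempty closed $X\subseteq\mathcal A^{\mathbb N}$ ($\mathcal A$ finite) with $SX=X$ for the left shift; transitive: for all nonempty open $U,V$ some $S^n(U)\cap V\ne\emptyset$. $\mathcal L$ = set of finite nonempty words occurring in points of $X$, $\mathcal L_n$ those of length $n$, $p(n)=|\mathcal L_n|$; eventually constant growth with rate $K$: $p(n+1)-p(n)=K$ for all large $n$. Aperiodic: there is no $P$ with $w_i=w_{i+P}$ for all $w\in\mathcal L$, $1\le i\le|w|-P$. $w$ is $\ell$-special if $|\{a:aw\in\mathcal L\}|\ge2$, $r$-special if $|\{b:wb\in\mathcal L\}|\ge 2$. Upper density: for $x\in X$ and $w\in\mathcal L$ with $n=|w|$, let $r(w,x,j)=1$ if $x_{[k,k+n-1]}=w$ for some $k$ with $(j-1)(K+1)n<k\le j(K+1)n$, and $r(w,x,j)=0$ otherwise; $\mathcal D(w,x)=\limsup_{N\to\infty}\frac1N\sum_{j=1}^N r(w,x,j)$. *)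

theory Defs
  imports "HOL-Analysis.Analysis" "HOL-Library.Liminf_Limsup"
begin

text \<open>Points of the full shift are functions nat => 'a (0-based storage);
  the paper's coordinate x_k (k = 1, 2, ...) is stored as x (k - 1).\<close>

definition full_shift_top :: "'a set \<Rightarrow> (nat \<Rightarrow> 'a) topology" where
  "full_shift_top A = product_topology (\<lambda>_. discrete_topology A) UNIV"

definition shift :: "(nat \<Rightarrow> 'a) \<Rightarrow> (nat \<Rightarrow> 'a)" where
  "shift x = (\<lambda>i. x (Suc i))"

definition subshift :: "'a set \<Rightarrow> (nat \<Rightarrow> 'a) set \<Rightarrow> bool" where
  "subshift A X \<longleftrightarrow> finite A \<and> X \<noteq> {} \<and> closedin (full_shift_top A) X \<and> shift ` X = X"

definition transitive_subshift :: "'a set \<Rightarrow> (nat \<Rightarrow> 'a) set \<Rightarrow> bool" where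
  "transitive_subshift A X \<longleftrightarrow> subshift A X \<and>
     (\<forall>U V. openin (subtopology (full_shift_top A) X) U \<and> U \<noteq> {} \<and>
            openin (subtopology (full_shift_top A) X) V \<and> V \<noteq> {} \<longrightarrow>
            (\<exists>n::nat. (shift ^^ n) ` U \<inter> V \<noteq> {}))"

definition factor :: "(nat \<Rightarrow> 'a) \<Rightarrow> nat \<Rightarrow> nat \<Rightarrow> 'a list" where
  "factor x i n = map x [i..<i+n]"

definition lang :: "(nat \<Rightarrow> 'a) set \<Rightarrow> 'a list set" where
  "lang X = {w. w \<noteq> [] \<and> (\<exists>x\<in>X. \<exists>i. w = factor x i (length w))}"

definition lang_n :: "(nat \<Rightarrow> 'a) set \<Rightarrow> nat \<Rightarrow> 'a list set" where
  "lang_n X n = {w \<in> lang X. length w = n}"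

definition complexity :: "(nat \<Rightarrow> 'a) set \<Rightarrow> nat \<Rightarrow> nat" where
  "complexity X n = card (lang_n X n)"

definition eventually_const_growth :: "(nat \<Rightarrow> 'a) set \<Rightarrow> nat \<Rightarrow> bool" where
  "eventually_const_growth X K \<longleftrightarrow>
     (\<exists>n0. \<forall>n\<ge>n0. int (complexity X (Suc n)) - int (complexity X n) = int K)"

definition aperiodic_lang :: "'a list set \<Rightarrow> bool" where
  "aperiodic_lang L \<longleftrightarrow>
     \<not> (\<exists>P::nat. P \<ge> 1 \<and> (\<forall>w\<in>L. \<forall>i. i + P < length w \<longrightarrow> w ! i = w ! (i + P)))"

definition l_special :: "'a list set \<Rightarrow> 'a list \<Rightarrow> bool" where
  "l_special L w \<longleftrightarrow> card {a. a # w \<in> L} \<ge> 2"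

definition r_special :: "'a list set \<Rightarrow> 'a list \<Rightarrow> bool" where
  "r_special L w \<longleftrightarrow> card {b. w @ [b] \<in> L} \<ge> 2"

definition occ_block :: "nat \<Rightarrow> 'a list \<Rightarrow> (nat \<Rightarrow> 'a) \<Rightarrow> nat \<Rightarrow> real" where
  "occ_block K w x j =
     (if \<exists>k. (j - 1) * (K + 1) * length w < k \<and> k \<le> j * (K + 1) * length w \<and>
             factor x (k - 1) (length w) = w then 1 else 0)"

definition upper_density :: "nat \<Rightarrow> 'a list \<Rightarrow> (nat \<Rightarrow> 'a) \<Rightarrow> ereal" where
  "upper_density K w x =
     limsup (\<lambda>N. ereal ((\<Sum>j=1..N. occ_block K w x j) / real N))"

end

(*
  For large n the complexity satisfies p(n) < (K + 1) n, so every window of (K + 1) n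
  consecutive positions of x contains two equal factors of length n, at positions a < b.
  If none of the factors of length n starting in [a, b) were right special, every word of
  the language beginning with the factor at a would be forced to follow the (b - a)-periodic
  sequence it starts; by transitivity every word of the language occurs in such a word, so
  the language would have period b - a.  Hence each block of length (K + 1) n of x contains
  the start of a right special factor, and, reversing words, of a left special one.  There
  are at most p(n + 1) - p(n) = K special words of each kind, so by pigeonhole one of them
  occurs in at least a fraction 1/K of the blocks, along infinitely many prefixes.
*)

theory Submission
  imports Defs
begin

section \<open>Factors of sequences\<close>

lemma length_factor [simp]: "length (factor x i n) = n"
  by (simp add: factor_def)

lemma factor_0 [simp]: "factor x i 0 = []"
  by (simp add: factor_def)

lemma factor_eq_Nil_iff [simp]: "factor x i n = [] \<longleftrightarrow> n = 0"
  by (auto simp: factor_def)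

lemma nth_factor [simp]: "m < n \<Longrightarrow> factor x i n ! m = x (i + m)"
  by (simp add: factor_def)

lemma factor_eq_iff: "factor x i n = factor y j n \<longleftrightarrow> (\<forall>m<n. x (i + m) = y (j + m))"
  by (simp add: list_eq_iff_nth_eq)

lemma factor_add: "factor x i (m + n) = factor x i m @ factor x (i + m) n"
  by (simp add: list_eq_iff_nth_eq nth_append add.assoc)

lemma factor_Suc: "factor x i (Suc n) = factor x i n @ [x (i + n)]"
  by (simp add: factor_def)

lemma factor_Suc_left: "factor x i (Suc n) = x i # factor x (Suc i) n"
  unfolding factor_def by (simp add: upt_conv_Cons del: upt_Suc)

lemma take_factor: "k \<le> n \<Longrightarrow> take k (factor x i n) = factor x i k"
  by (simp add: factor_def take_map)

lemma drop_factor: "drop k (factor x i n) = factor x (i + k) (n - k)"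
  by (simp add: list_eq_iff_nth_eq add.assoc)

lemma factor_shift: "factor (shift x) i n = factor x (Suc i) n"
  by (simp add: factor_eq_iff shift_def)

lemma factor_funpow_shift: "factor ((shift ^^ m) x) i n = factor x (i + m) n"
proof -
  have "(shift ^^ m) x = (\<lambda>t. x (t + m))"
    by (induction m arbitrary: x) (simp_all add: shift_def)
  then show ?thesis
    by (simp add: factor_eq_iff ac_simps)
qed

lemma funpow_shift_image: "shift ` X = X \<Longrightarrow> (shift ^^ m) ` X = X"
proof (induction m)
  case (Suc m)
  have "(shift ^^ Suc m) ` X = shift ` (shift ^^ m) ` X"
    by (simp add: image_image)
  with Suc show ?case by simp
qed simp

section \<open>Periods and reversal\<close>

definition has_period :: "nat \<Rightarrow> 'a list \<Rightarrow> bool" where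
  "has_period P w \<longleftrightarrow> (\<forall>i. i + P < length w \<longrightarrow> w ! i = w ! (i + P))"

lemma aperiodic_lang_iff: "aperiodic_lang L \<longleftrightarrow> (\<forall>P>0. \<exists>w\<in>L. \<not> has_period P w)"
  unfolding aperiodic_lang_def has_period_def by (metis One_nat_def Suc_le_eq)

lemma has_period_rev [simp]: "has_period P (rev w) \<longleftrightarrow> has_period P w"
proof -
  have "has_period P w" if "has_period P (rev w)" for w :: "'a list"
    unfolding has_period_def
  proof (intro allI impI)
    fix i assume i: "i + P < length w"
    have "rev w ! (length w - 1 - (i + P)) = rev w ! (length w - 1 - (i + P) + P)"
      using that i unfolding has_period_def by auto
    with i show "w ! i = w ! (i + P)"
      by (simp add: rev_nth Suc_diff_Suc)
  qed
  from this[of w] this[of "rev w"] show ?thesis by auto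
qed

lemma aperiodic_lang_rev: "aperiodic_lang L \<Longrightarrow> aperiodic_lang (rev ` L)"
  by (auto simp: aperiodic_lang_iff)

lemma l_special_conv_r_special_rev: "l_special L w \<longleftrightarrow> r_special (rev ` L) (rev w)"
proof -
  have "{b. rev w @ [b] \<in> rev ` L} = {a. a # w \<in> L}"
    by (metis (no_types) rev.simps(2) rev_rev_ident image_iff inj_image_mem_iff inj_on_inverseI)
  then show ?thesis
    by (simp add: l_special_def r_special_def)
qed

lemma periodic_mod:
  fixes p :: "nat \<Rightarrow> 'a"
  assumes "\<And>k. p (k + d) = p k"
  shows "p (k mod d) = p k"
proof -
  have "p (r + q * d) = p r" for q r
  proof (induction q)
    case (Suc q)
    have "p (r + Suc q * d) = p (r + q * d + d)"
      by (simp add: algebra_simps)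
    with Suc show ?case
      by (simp add: assms)
  qed simp
  then show ?thesis
    by (metis mod_div_mult_eq mult.commute)
qed

lemma factor_periodic_mod:
  "(\<And>k. p (k + d) = p k) \<Longrightarrow> factor p (i mod d) n = factor p i n"
  by (simp add: factor_eq_iff) (metis periodic_mod mod_add_left_eq)

lemma has_period_factor:
  assumes "\<And>k. p (k + d) = p k"
  shows "has_period d (factor p i n)"
  unfolding has_period_def using assms[of "i + _"] by (simp add: add.assoc)

lemma nth_mod_if_border:
  assumes "take n W = drop d W" "length W = d + n" "k < length W"
  shows "W ! (k mod d) = W ! k"
  using assms(3)
proof (induction k rule: less_induct)
  case (less k)
  show ?case
  proof (cases "d \<le> k \<and> 0 < d")
    case True
    then have "W ! k = drop d W ! (k - d)"
      using less.prems by (simp add: nth_drop)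
    also have "\<dots> = take n W ! (k - d)"
      by (simp add: assms(1))
    also have "\<dots> = W ! (k - d)"
      using True less.prems assms(2) by (simp add: nth_take less_diff_conv2)
    finally show ?thesis
      using True less.IH[of "k - d"] less.prems by (simp add: le_mod_geq)
  qed auto
qed

section \<open>Transitive languages\<close>

locale transitive_language =
  fixes A :: "'a set" and L :: "'a list set"
  assumes finite_alphabet: "finite A"
    and lang_subset_lists: "L \<subseteq> lists A"
    and factorial: "p @ q @ s \<in> L \<Longrightarrow> q \<noteq> [] \<Longrightarrow> q \<in> L"
    and left_extendable: "w \<in> L \<Longrightarrow> \<exists>a. a # w \<in> L"
    and right_extendable: "w \<in> L \<Longrightarrow> \<exists>b. w @ [b] \<in> L"
    and recurrent: "u \<in> L \<Longrightarrow> v \<in> L \<Longrightarrow> \<exists>z. u @ z @ v \<in> L"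
begin

lemma rev_transitive_language: "transitive_language A (rev ` L)"
proof
  show "finite A" by (fact finite_alphabet)
  show "rev ` L \<subseteq> lists A"
    using lang_subset_lists by auto
  show "q \<in> rev ` L" if "p @ q @ s \<in> rev ` L" and "q \<noteq> []" for p q s
  proof -
    obtain x where "x \<in> L" "p @ q @ s = rev x"
      using \<open>p @ q @ s \<in> rev ` L\<close> by blast
    then have "rev s @ rev q @ rev p \<in> L"
      by (metis rev_append rev_rev_ident append_assoc)
    then have "rev q \<in> L"
      using factorial \<open>q \<noteq> []\<close> by simp
    then show ?thesis
      by (metis image_eqI rev_rev_ident)
  qed
  show "\<exists>a. a # w \<in> rev ` L" if w: "w \<in> rev ` L" for w
  proof -
    have "rev w \<in> L"
      using w by auto
    then obtain b where "rev w @ [b] \<in> L"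
      using right_extendable by blast
    then have "rev (rev w @ [b]) \<in> rev ` L"
      by (rule imageI)
    then have "b # w \<in> rev ` L"
      by simp
    then show ?thesis ..
  qed
  show "\<exists>b. w @ [b] \<in> rev ` L" if w: "w \<in> rev ` L" for w
  proof -
    have "rev w \<in> L"
      using w by auto
    then obtain a where "a # rev w \<in> L"
      using left_extendable by blast
    then have "rev (a # rev w) \<in> rev ` L"
      by (rule imageI)
    then have "w @ [a] \<in> rev ` L"
      by simp
    then show ?thesis ..
  qed
  show "\<exists>z. u @ z @ v \<in> rev ` L" if uv: "u \<in> rev ` L" "v \<in> rev ` L" for u v
  proof -
    have "rev v \<in> L" "rev u \<in> L"
      using uv by auto
    then obtain z where "rev v @ z @ rev u \<in> L"
      using recurrent by blast
    then have "rev (rev v @ z @ rev u) \<in> rev ` L"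
      by (rule imageI)
    then have "u @ rev z @ v \<in> rev ` L"
      by simp
    then show ?thesis ..
  qed
qed

lemma finite_right_extensions: "finite {b. w @ [b] \<in> L}"
proof (rule finite_subset[OF _ finite_alphabet])
  show "{b. w @ [b] \<in> L} \<subseteq> A"
    using lang_subset_lists by auto
qed

lemma right_extension_unique:
  assumes "\<not> r_special L w" "w @ [p] \<in> L" "w @ [q] \<in> L"
  shows "p = q"
proof (rule ccontr)
  assume "p \<noteq> q"
  then have "card {p, q} \<le> card {b. w @ [b] \<in> L}"
    using assms(2,3) by (intro card_mono[OF finite_right_extensions]) auto
  with \<open>p \<noteq> q\<close> assms(1) show False
    by (simp add: r_special_def)
qed

lemma finite_words_of_length: "finite {w \<in> L. length w = n}"
proof (rule finite_subset[OF _ finite_lists_length_eq[OF finite_alphabet]])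
  show "{w \<in> L. length w = n} \<subseteq> {w. set w \<subseteq> A \<and> length w = n}"
    using lang_subset_lists by auto
qed

lemma take_drop_in_lang:
  assumes "w \<in> L" "0 < m" "k + m \<le> length w"
  shows "take m (drop k w) \<in> L"
proof -
  have "take k w @ take m (drop k w) @ drop m (drop k w) = w"
    by (simp only: append_take_drop_id)
  with assms show ?thesis
    using factorial[of "take k w" "take m (drop k w)" "drop m (drop k w)"] by auto
qed

lemma card_r_special_le:
  assumes "0 < n"
  shows "card {w \<in> L. length w = n \<and> r_special L w} + card {w \<in> L. length w = n}
           \<le> card {w \<in> L. length w = Suc n}"
proof -
  let ?Ln = "{w \<in> L. length w = n}"
  define E where "E w = {b. w @ [b] \<in> L}" for w
  have "{w \<in> L. length w = Suc n} = (\<Union>w\<in>?Ln. (\<lambda>b. w @ [b]) ` E w)"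
  proof (intro equalityI subsetI)
    fix u assume u: "u \<in> {w \<in> L. length w = Suc n}"
    then have len: "length u = Suc n"
      by simp
    then have "u = butlast u @ [last u]" "length (butlast u) = n"
      by (auto intro: append_butlast_last_id[symmetric])
    moreover from this(2) have "butlast u \<noteq> []"
      using assms by (metis length_greater_0_conv)
    ultimately have "butlast u \<in> ?Ln" "last u \<in> E (butlast u)"
      using u factorial[of "[]" "butlast u" "[last u]"] by (auto simp: E_def)
    with \<open>u = butlast u @ [last u]\<close> show "u \<in> (\<Union>w\<in>?Ln. (\<lambda>b. w @ [b]) ` E w)"
      by blast
  qed (auto simp: E_def)
  then have "card {w \<in> L. length w = Suc n} = card (\<Union>w\<in>?Ln. (\<lambda>b. w @ [b]) ` E w)"
    by simp
  also have "\<dots> = (\<Sum>w\<in>?Ln. card ((\<lambda>b. w @ [b]) ` E w))"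
    by (rule card_UN_disjoint) (auto simp: finite_words_of_length finite_right_extensions E_def)
  also have "\<dots> = (\<Sum>w\<in>?Ln. card (E w))"
    by (simp add: card_image inj_on_def)
  also have "\<dots> \<ge> (\<Sum>w\<in>?Ln. 1 + of_bool (r_special L w))"
  proof (intro sum_mono)
    fix w assume "w \<in> ?Ln"
    then have "E w \<noteq> {}"
      using right_extendable by (auto simp: E_def)
    then show "1 + of_bool (r_special L w) \<le> card (E w)"
      using finite_right_extensions by (auto simp: E_def r_special_def Suc_le_eq card_gt_0_iff)
  qed
  also have "(\<Sum>w\<in>?Ln. 1 + of_bool (r_special L w))
      = card ?Ln + card (?Ln \<inter> {w. r_special L w})"
    unfolding sum.distrib using finite_words_of_length by simp
  also have "?Ln \<inter> {w. r_special L w} = {w \<in> L. length w = n \<and> r_special L w}"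
    by auto
  finally show ?thesis
    by simp
qed

lemma card_l_special_le:
  assumes "0 < n"
  shows "card {w \<in> L. length w = n \<and> l_special L w} + card {w \<in> L. length w = n}
           \<le> card {w \<in> L. length w = Suc n}"
proof -
  interpret rev: transitive_language A "rev ` L"
    by (fact rev_transitive_language)
  have card_rev: "card {w \<in> rev ` L. Q w} = card {w \<in> L. Q (rev w)}" for Q
  proof -
    have "{w \<in> rev ` L. Q w} = rev ` {w \<in> L. Q (rev w)}"
      by auto
    then show ?thesis
      by (simp add: card_image inj_on_def)
  qed
  show ?thesis
    using rev.card_r_special_le[OF assms] by (simp add: card_rev l_special_conv_r_special_rev)
qed

lemma prefix_of_sequence_if_not_r_special:
  assumes "0 < n" "\<And>i. factor p i (Suc n) \<in> L" "\<And>i. \<not> r_special L (factor p i n)"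
    and "u \<in> L" "n \<le> length u" "take n u = factor p 0 n"
  shows "u = factor p 0 (length u)"
  using assms(4-)
proof (induction u rule: rev_induct)
  case (snoc b u)
  show ?case
  proof (cases "n \<le> length u")
    case False
    with snoc.prems have "length (u @ [b]) = n"
      by simp
    with snoc.prems(3) show ?thesis
      by simp
  next
    case True
    obtain l where l: "length u = l"
      by blast
    have "u \<noteq> []"
      using True assms(1) by auto
    then have "u \<in> L"
      using factorial[of "[]" u "[b]"] snoc.prems(1) by simp
    moreover have "take n u = factor p 0 n"
      using snoc.prems(3) True by simp
    ultimately have u: "u = factor p 0 l"
      using snoc.IH True l by simp
    define j where "j = l - n"
    have suffix: "drop j u = factor p j n"
      using True l by (simp add: u drop_factor j_def)
    have "drop j u @ [b] \<in> L"
      using factorial[of "take j u" "drop j u @ [b]" "[]"] snoc.prems(1)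
      by (simp del: append_assoc add: append_assoc[symmetric])
    then have "factor p j n @ [b] \<in> L"
      by (simp add: suffix)
    moreover have "factor p j n @ [p (j + n)] \<in> L"
      using assms(2)[of j] by (simp add: factor_Suc)
    ultimately have "b = p (j + n)"
      using right_extension_unique[OF assms(3)] by blast
    then show ?thesis
      using True l by (simp add: u factor_Suc j_def)
  qed
qed (use assms(1) in simp)

lemma r_special_factor_if_periodic:
  assumes "aperiodic_lang L" "0 < n" "0 < d" "\<And>k. p (k + d) = p k"
    and "\<And>i. factor p i (Suc n) \<in> L"
  shows "\<exists>i<d. r_special L (factor p i n)"
proof (rule ccontr)
  assume none: "\<not> ?thesis"
  have not_special: "\<not> r_special L (factor p i n)" for i
  proof -
    have "i mod d < d"
      using assms(3) by simp
    with none have "\<not> r_special L (factor p (i mod d) n)"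
      by blast
    then show ?thesis
      by (simp add: factor_periodic_mod[where p = p and d = d, OF assms(4)])
  qed
  have "factor p 0 n \<in> L"
    using factorial[of "[]" "factor p 0 n" "[p n]"] assms(2) assms(5)[of 0] by (simp add: factor_Suc)
  have "has_period d v" if "v \<in> L" for v
  proof -
    obtain z where z: "factor p 0 n @ z @ v \<in> L"
      using recurrent \<open>factor p 0 n \<in> L\<close> \<open>v \<in> L\<close> by blast
    then have "factor p 0 n @ z @ v = factor p 0 (n + length z + length v)"
      using prefix_of_sequence_if_not_r_special[OF assms(2,5) not_special z] by (simp add: add.assoc)
    then have "drop (n + length z) (factor p 0 n @ z @ v)
        = drop (n + length z) (factor p 0 (n + length z + length v))"
      by (rule arg_cong)
    then have "v = factor p (n + length z) (length v)"
      by (simp add: drop_factor)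
    then show ?thesis
      using has_period_factor[where p = p and d = d, OF assms(4)] by metis
  qed
  then show False
    using assms(1,3) by (auto simp: aperiodic_lang_iff)
qed

lemma r_special_factor_if_border:
  assumes "aperiodic_lang L" "W \<in> L" "length W = d + n" "take n W = drop d W" "0 < n" "0 < d"
  shows "\<exists>c<d. r_special L (take n (drop c W))"
proof -
  define p where "p k = W ! (k mod d)" for k
  have periodic: "p (k + d) = p k" for k
    by (simp add: p_def)
  have factor_p: "factor p c m = take m (drop c W)" if "c + m \<le> d + n" for c m
    using nth_mod_if_border[OF assms(4,3)] that assms(3) by (simp add: list_eq_iff_nth_eq p_def)
  have "factor p i (Suc n) \<in> L" for i
  proof -
    have "i mod d < d"
      using assms(6) by simp
    have "factor p i (Suc n) = factor p (i mod d) (Suc n)"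
      by (simp add: factor_periodic_mod[where p = p and d = d, OF periodic])
    also have "\<dots> = take (Suc n) (drop (i mod d) W)"
      using \<open>i mod d < d\<close> by (intro factor_p) simp
    also have "\<dots> \<in> L"
      using \<open>i mod d < d\<close> assms(2,3) by (intro take_drop_in_lang) auto
    finally show ?thesis .
  qed
  then obtain c where "c < d" "r_special L (factor p c n)"
    using r_special_factor_if_periodic[where p = p, OF assms(1,5,6) periodic] by blast
  then show ?thesis
    using factor_p[of c n] by auto
qed

lemma l_special_factor_if_border:
  assumes "aperiodic_lang L" "W \<in> L" "length W = d + n" "take n W = drop d W" "0 < n" "0 < d"
  shows "\<exists>c. 0 < c \<and> c \<le> d \<and> l_special L (take n (drop c W))"
proof -
  interpret rev: transitive_language A "rev ` L"
    by (fact rev_transitive_language)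
  have "take n (rev W) = drop d (rev W)"
    using assms(3,4) by (simp add: take_rev drop_rev)
  then obtain c where "c < d" "r_special (rev ` L) (take n (drop c (rev W)))"
    using rev.r_special_factor_if_border[of "rev W" d n] assms aperiodic_lang_rev by auto
  moreover have "take n (drop c (rev W)) = rev (take n (drop (d - c) W))"
    using \<open>c < d\<close> assms(3) by (simp add: drop_rev take_rev drop_take)
  ultimately show ?thesis
    by (intro exI[of _ "d - c"]) (auto simp: l_special_conv_r_special_rev)
qed

end

section \<open>The language of a transitive subshift\<close>

lemma topspace_full_shift_top: "topspace (full_shift_top A) = {x. \<forall>i. x i \<in> A}"
  by (auto simp: full_shift_top_def PiE_iff)

lemma factor_in_lang: "x \<in> X \<Longrightarrow> 0 < n \<Longrightarrow> factor x i n \<in> lang X"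
  by (auto simp: lang_def)

lemma in_langE:
  assumes "w \<in> lang X"
  obtains x i where "x \<in> X" "w = factor x i (length w)"
  using assms by (auto simp: lang_def)

lemma subshift_lang_subset_lists:
  assumes "subshift A X"
  shows "lang X \<subseteq> lists A"
proof
  have "X \<subseteq> topspace (full_shift_top A)"
    using assms closedin_subset by (auto simp: subshift_def)
  then have points: "X \<subseteq> {x. \<forall>i. x i \<in> A}"
    by (simp add: topspace_full_shift_top)
  fix w assume "w \<in> lang X"
  then obtain x i n where "x \<in> X" "w = factor x i n"
    by (metis in_langE)
  moreover from this(1) have "\<forall>k. x k \<in> A"
    using points by blast
  ultimately show "w \<in> lists A"
    by (auto simp: factor_def)
qed

lemma finite_lang_n:
  assumes "subshift A X"
  shows "finite (lang_n X n)"
proof (rule finite_subset)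
  show "lang_n X n \<subseteq> {w. set w \<subseteq> A \<and> length w = n}"
    using subshift_lang_subset_lists[OF assms] by (auto simp: lang_n_def)
  show "finite {w. set w \<subseteq> A \<and> length w = n}"
    using assms by (intro finite_lists_length_eq) (simp add: subshift_def)
qed

lemma openin_cylinder:
  assumes "subshift A X"
  shows "openin (subtopology (full_shift_top A) X) {x \<in> X. factor x i (length u) = u}"
proof -
  let ?T = "full_shift_top A"
  define C where "C m = {x \<in> topspace ?T. x (i + m) \<in> {u ! m} \<inter> A}" for m
  have "openin ?T (C m)" for m
    unfolding C_def full_shift_top_def
    by (rule openin_continuous_map_preimage[OF continuous_map_product_projection]) auto
  then have "openin ?T ((\<Inter>m\<in>{..<length u}. C m) \<inter> topspace ?T)"
    by (intro openin_INT) auto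
  moreover have "X \<subseteq> topspace ?T"
    using assms closedin_subset by (auto simp: subshift_def)
  then have "{x \<in> X. factor x i (length u) = u} = X \<inter> ((\<Inter>m\<in>{..<length u}. C m) \<inter> topspace ?T)"
    by (auto simp: C_def list_eq_iff_nth_eq topspace_full_shift_top)
  ultimately show ?thesis
    by (simp add: openin_subtopology_Int2)
qed

lemma lang_recurrent:
  assumes "transitive_subshift A X" "u \<in> lang X" "v \<in> lang X"
  shows "\<exists>z. u @ z @ v \<in> lang X"
proof -
  have X: "subshift A X" "shift ` X = X"
    using assms(1) by (auto simp: transitive_subshift_def subshift_def)
  obtain x i y j where "x \<in> X" "u = factor x i (length u)" "y \<in> X" "v = factor y j (length v)"
    using assms(2,3) by (metis in_langE)
  define U where "U = {x \<in> X. factor x 0 (length u) = u}"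
  define V where "V = {x \<in> X. factor x (length u) (length v) = v}"
  have "(shift ^^ i) x \<in> U"
    using \<open>x \<in> X\<close> \<open>u = factor x i (length u)\<close> funpow_shift_image[OF X(2)]
    by (auto simp: U_def factor_funpow_shift)
  obtain y' where y': "y' \<in> X" "(shift ^^ length u) y' = (shift ^^ j) y"
    using \<open>y \<in> X\<close> funpow_shift_image[OF X(2)] by (metis imageE imageI)
  have "factor y' (length u) (length v) = factor ((shift ^^ length u) y') 0 (length v)"
    by (simp add: factor_funpow_shift)
  also have "\<dots> = factor y j (length v)"
    by (simp add: y'(2) factor_funpow_shift)
  also have "\<dots> = v"
    using \<open>v = factor y j (length v)\<close> by (rule sym)
  finally have "y' \<in> V"
    using y'(1) by (simp add: V_def)
  have "openin (subtopology (full_shift_top A) X) U" "openin (subtopology (full_shift_top A) X) V"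
    unfolding U_def V_def by (simp_all add: openin_cylinder[OF X(1)])
  with \<open>(shift ^^ i) x \<in> U\<close> \<open>y' \<in> V\<close> obtain m where "(shift ^^ m) ` U \<inter> V \<noteq> {}"
    using assms(1) unfolding transitive_subshift_def by blast
  then obtain w where w: "w \<in> X" "factor w 0 (length u) = u" "factor w (length u + m) (length v) = v"
    by (auto simp: U_def V_def factor_funpow_shift add.commute)
  then have "factor w 0 (length u + m + length v) = u @ factor w (length u) m @ v"
    by (simp add: factor_add)
  moreover have "factor w 0 (length u + m + length v) \<in> lang X"
    using assms(2) \<open>w \<in> X\<close> by (intro factor_in_lang) (auto simp: lang_def)
  ultimately show ?thesis
    by auto
qed

lemma transitive_language_lang:
  assumes "transitive_subshift A X"
  shows "transitive_language A (lang X)"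
proof
  have X: "subshift A X"
    using assms by (simp add: transitive_subshift_def)
  then show "finite A"
    by (simp add: subshift_def)
  show "lang X \<subseteq> lists A"
    using X by (rule subshift_lang_subset_lists)
  show "q \<in> lang X" if pqs: "p @ q @ s \<in> lang X" and "q \<noteq> []" for p q s
  proof -
    obtain x i n where "x \<in> X" and pqs_eq: "p @ q @ s = factor x i n"
      using pqs by (metis in_langE)
    have len: "length p + length q + length s = n"
      using arg_cong[OF pqs_eq, of length] by simp
    have "q = take (length q) (drop (length p) (p @ q @ s))"
      by simp
    also have "\<dots> = factor x (i + length p) (length q)"
      using len by (simp only: pqs_eq) (simp add: drop_factor take_factor)
    finally have "q = factor x (i + length p) (length q)" .
    moreover have "factor x (i + length p) (length q) \<in> lang X"
      using \<open>x \<in> X\<close> \<open>q \<noteq> []\<close> by (intro factor_in_lang) auto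
    ultimately show ?thesis
      by metis
  qed
  show "\<exists>a. a # w \<in> lang X" if w: "w \<in> lang X" for w
  proof -
    obtain x i n where "x \<in> X" "w = factor x i n"
      using w by (metis in_langE)
    moreover have "x \<in> shift ` X"
      using X \<open>x \<in> X\<close> by (simp add: subshift_def)
    then obtain y where "y \<in> X" "x = shift y"
      by blast
    ultimately have "y i # w = factor y i (Suc n)"
      by (simp add: factor_Suc_left factor_shift)
    then have "y i # w \<in> lang X"
      using factor_in_lang[OF \<open>y \<in> X\<close>, of "Suc n" i] by simp
    then show ?thesis ..
  qed
  show "\<exists>b. w @ [b] \<in> lang X" if w: "w \<in> lang X" for w
  proof -
    obtain x i n where "x \<in> X" "w = factor x i n"
      using w by (metis in_langE)
    then show ?thesis
      using factor_in_lang[of x X "Suc n" i] by (auto simp: factor_Suc)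
  qed
  show "\<exists>z. u @ z @ v \<in> lang X" if "u \<in> lang X" "v \<in> lang X" for u v
    using lang_recurrent[OF assms that] .
qed

lemma special_factors_in_window:
  assumes X: "transitive_subshift A X" and aperiodic: "aperiodic_lang (lang X)"
    and "x \<in> X" "0 < n" "complexity X n < m"
  shows "\<exists>t\<in>{i..<i + m}. r_special (lang X) (factor x t n)"
    and "\<exists>t\<in>{i..<i + m}. l_special (lang X) (factor x t n)"
proof -
  interpret transitive_language A "lang X"
    using X by (rule transitive_language_lang)
  obtain a b where ab: "i \<le> a" "a < b" "b < i + m" "factor x a n = factor x b n"
  proof -
    have "(\<lambda>t. factor x t n) ` {i..<i + m} \<subseteq> {w \<in> lang X. length w = n}"
      using factor_in_lang[OF \<open>x \<in> X\<close> \<open>0 < n\<close>] by auto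
    then have "card ((\<lambda>t. factor x t n) ` {i..<i + m}) \<le> complexity X n"
      unfolding complexity_def lang_n_def by (intro card_mono[OF finite_words_of_length])
    then have "card ((\<lambda>t. factor x t n) ` {i..<i + m}) < card {i..<i + m}"
      using assms(5) by simp
    then obtain a b where "a \<in> {i..<i + m}" "b \<in> {i..<i + m}" "a \<noteq> b"
        "factor x a n = factor x b n"
      using pigeonhole unfolding inj_on_def by blast
    then show thesis
      using that[of a b] that[of b a] by (cases "a < b") auto
  qed
  define W where "W = factor x a (b - a + n)"
  have W: "W \<in> lang X" "length W = (b - a) + n" "take n W = drop (b - a) W"
    using factor_in_lang[OF \<open>x \<in> X\<close>] ab \<open>0 < n\<close>
    by (simp_all add: W_def take_factor drop_factor)
  have window: "take n (drop c W) = factor x (a + c) n" if "c \<le> b - a" for c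
    using that by (simp add: W_def drop_factor take_factor)
  obtain c where "c < b - a" "r_special (lang X) (take n (drop c W))"
    using r_special_factor_if_border[OF aperiodic W] ab(2) \<open>0 < n\<close> by auto
  with ab window show "\<exists>t\<in>{i..<i + m}. r_special (lang X) (factor x t n)"
    by (intro bexI[of _ "a + c"]) auto
  obtain c where "0 < c" "c \<le> b - a" "l_special (lang X) (take n (drop c W))"
    using l_special_factor_if_border[OF aperiodic W] ab(2) \<open>0 < n\<close> by auto
  with ab window show "\<exists>t\<in>{i..<i + m}. l_special (lang X) (factor x t n)"
    by (intro bexI[of _ "a + c"]) auto
qed

section \<open>Frequent special factors\<close>

lemma eventually_const_growthE:
  assumes "eventually_const_growth X K"
  obtains N where "\<And>n. N \<le> n \<Longrightarrow> complexity X (Suc n) = complexity X n + K"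
    and "\<And>n. N \<le> n \<Longrightarrow> complexity X n < (K + 1) * n"
proof -
  obtain n0 where n0: "\<And>n. n0 \<le> n \<Longrightarrow> complexity X (Suc n) = complexity X n + K"
    using assms unfolding eventually_const_growth_def by fastforce
  have bound: "complexity X n \<le> complexity X n0 + K * n" if "n0 \<le> n" for n
    using that by (induction n rule: dec_induct) (auto simp: n0)
  show thesis
  proof (rule that)
    show "complexity X n < (K + 1) * n" if "max n0 (Suc (complexity X n0)) \<le> n" for n
      using that bound[of n] by simp
  qed (use n0 in simp)
qed

lemma limsup_average_pigeonhole:
  fixes f :: "'w \<Rightarrow> nat \<Rightarrow> real"
  assumes "finite S" "card S \<le> K" "\<And>w j. 0 \<le> f w j" "\<And>j. 0 < j \<Longrightarrow> \<exists>w\<in>S. 1 \<le> f w j"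
  shows "\<exists>w\<in>S. ereal (1 / real K) \<le> limsup (\<lambda>N. ereal ((\<Sum>j=1..N. f w j) / real N))"
proof (rule ccontr)
  define avg where "avg w N = (\<Sum>j=1..N. f w j) / real N" for w N
  assume none: "\<not> ?thesis"
  have "eventually (\<lambda>N. avg w N < 1 / real K) sequentially" if "w \<in> S" for w
  proof -
    have "limsup (\<lambda>N. ereal (avg w N)) < ereal (1 / real K)"
      using none that by (auto simp: avg_def not_le)
    from Limsup_lessD[OF this] show ?thesis
      by simp
  qed
  then have "eventually (\<lambda>N. \<forall>w\<in>S. avg w N < 1 / real K) sequentially"
    by (intro eventually_ball_finite[OF assms(1)]) blast
  with eventually_gt_at_top[of 0]
  have "eventually (\<lambda>N. 0 < N \<and> (\<forall>w\<in>S. avg w N < 1 / real K)) sequentially"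
    by (rule eventually_conj)
  then obtain N where N: "0 < N" "\<And>w. w \<in> S \<Longrightarrow> avg w N < 1 / real K"
    using eventually_happens'[OF sequentially_bot] by blast
  obtain w0 where "w0 \<in> S"
    using assms(4)[of 1] by auto
  then have "0 < card S"
    using assms(1) card_gt_0_iff by blast
  then have "1 \<le> real K"
    using assms(2) by simp
  have "(\<Sum>w\<in>S. avg w N) < (\<Sum>w\<in>S. 1 / real K)"
    using \<open>w0 \<in> S\<close> N(2) assms(1) by (intro sum_strict_mono) auto
  also have "\<dots> \<le> 1"
    using assms(2) \<open>1 \<le> real K\<close> by (simp add: divide_le_eq_1)
  finally have "(\<Sum>w\<in>S. avg w N) < 1" .
  moreover have "real N \<le> (\<Sum>j=1..N. \<Sum>w\<in>S. f w j)"
  proof -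
    have hit: "1 \<le> (\<Sum>w\<in>S. f w j)" if j: "0 < j" for j
    proof -
      obtain w where "w \<in> S" "1 \<le> f w j"
        using assms(4)[OF j] by blast
      moreover have "f w j \<le> (\<Sum>w\<in>S. f w j)"
        using \<open>w \<in> S\<close> assms(1,3) by (intro member_le_sum)
      ultimately show ?thesis
        by linarith
    qed
    have "(\<Sum>j=1..N. 1::real) \<le> (\<Sum>j=1..N. \<Sum>w\<in>S. f w j)"
      by (rule sum_mono) (use hit in auto)
    then show ?thesis
      by simp
  qed
  moreover have "(\<Sum>j=1..N. \<Sum>w\<in>S. f w j) = real N * (\<Sum>w\<in>S. avg w N)"
    using N(1) by (simp add: avg_def sum_divide_distrib[symmetric] sum.swap[of _ S])
  ultimately show False
    using N(1) by simp
qed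

lemma occ_block_factor:
  assumes "0 < j" "(j - 1) * ((K + 1) * n) \<le> t" "t < j * ((K + 1) * n)"
  shows "occ_block K (factor x t n) x j = 1"
proof -
  have "(j - 1) * (K + 1) * length (factor x t n) < Suc t"
    "Suc t \<le> j * (K + 1) * length (factor x t n)"
    using assms by (simp_all only: length_factor mult.assoc)
  then show ?thesis
    unfolding occ_block_def by (intro if_P exI[of _ "Suc t"]) auto
qed

lemma upper_density_ge_if_syndetic:
  assumes "finite S" "card S \<le> K" "\<And>i. \<exists>t\<in>{i..<i + (K + 1) * n}. factor x t n \<in> S"
  shows "\<exists>w\<in>S. ereal (1 / real K) \<le> upper_density K w x"
proof -
  have hit: "\<exists>w\<in>S. 1 \<le> occ_block K w x j" if j: "0 < j" for j
  proof -
    obtain t where t: "(j - 1) * ((K + 1) * n) \<le> t" "t < (j - 1) * ((K + 1) * n) + (K + 1) * n"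
      and "factor x t n \<in> S"
      using assms(3)[of "(j - 1) * ((K + 1) * n)"] by auto
    moreover have "(j - 1) * ((K + 1) * n) + (K + 1) * n = j * ((K + 1) * n)"
      using j by (cases j) auto
    ultimately have "occ_block K (factor x t n) x j = 1"
      using j by (intro occ_block_factor) auto
    with \<open>factor x t n \<in> S\<close> show ?thesis
      by (intro bexI[of _ "factor x t n"]) simp_all
  qed
  have "0 \<le> occ_block K w x j" for w j
    by (simp add: occ_block_def)
  from limsup_average_pigeonhole[where f = "\<lambda>w j. occ_block K w x j", OF assms(1,2) this hit]
  show ?thesis
    by (simp add: upper_density_def)
qed

lemma frequent_factor_if_syndetic:
  assumes "subshift A X" "x \<in> X" "0 < n" "card {w \<in> lang_n X n. P w} \<le> K"
    and "\<And>i. \<exists>t\<in>{i..<i + (K + 1) * n}. P (factor x t n)"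
  shows "\<exists>w\<in>lang_n X n. P w \<and> ereal (1 / real K) \<le> upper_density K w x"
proof -
  let ?S = "{w \<in> lang_n X n. P w}"
  have "finite ?S"
    using finite_lang_n[OF assms(1)] by simp
  moreover have "\<exists>t\<in>{i..<i + (K + 1) * n}. factor x t n \<in> ?S" for i
    using assms(5)[of i] factor_in_lang[OF assms(2,3)] by (auto simp: lang_n_def)
  ultimately show ?thesis
    using upper_density_ge_if_syndetic[OF _ assms(4)] by blast
qed

theorem mainTheorem9:
  fixes A :: "'a set" and X :: "(nat \<Rightarrow> 'a) set" and K :: nat
  assumes "transitive_subshift A X"
    and "aperiodic_lang (lang X)"
    and "eventually_const_growth X K"
  shows "\<exists>N. \<forall>x\<in>X. \<forall>n\<ge>N.
           (\<exists>w\<in>lang_n X n. l_special (lang X) w \<and> upper_density K w x \<ge> ereal (1 / real K)) \<and>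
           (\<exists>w\<in>lang_n X n. r_special (lang X) w \<and> upper_density K w x \<ge> ereal (1 / real K))"
proof -
  interpret transitive_language A "lang X"
    using assms(1) by (rule transitive_language_lang)
  have X: "subshift A X"
    using assms(1) by (simp add: transitive_subshift_def)
  obtain N where growth: "\<And>n. N \<le> n \<Longrightarrow> complexity X (Suc n) = complexity X n + K"
    and sublinear: "\<And>n. N \<le> n \<Longrightarrow> complexity X n < (K + 1) * n"
    using eventually_const_growthE[OF assms(3)] by blast
  show ?thesis
  proof (intro exI ballI allI impI conjI)
    fix x n assume x: "x \<in> X" and n: "N \<le> n"
    have "0 < n"
      using sublinear[OF n] by (intro gr0I) auto
    have card: "card {w \<in> lang_n X n. l_special (lang X) w} \<le> K"
      "card {w \<in> lang_n X n. r_special (lang X) w} \<le> K"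
      using card_l_special_le[OF \<open>0 < n\<close>] card_r_special_le[OF \<open>0 < n\<close>] growth[OF n]
      by (simp_all add: complexity_def lang_n_def)
    note frequent = frequent_factor_if_syndetic[OF X x \<open>0 < n\<close>]
    note windows = special_factors_in_window[OF assms(1,2) x \<open>0 < n\<close> sublinear[OF n]]
    show "\<exists>w\<in>lang_n X n. l_special (lang X) w \<and> upper_density K w x \<ge> ereal (1 / real K)"
      using frequent[OF card(1) windows(2)] .
    show "\<exists>w\<in>lang_n X n. r_special (lang X) w \<and> upper_density K w x \<ge> ereal (1 / real K)"
      using frequent[OF card(2) windows(1)] .
  qed
qed

end
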